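(* Fix $\alpha\in(0,1]$, $\epsilon>0$, a function $A:(2\pi,\infty)\to[0,\infty)$ and a function $B:\{(\beta_L,\beta_R)\in(0,\infty)^2:\beta_L\beta_R>4\pi^2\}\to[0,\infty)$. Consider the class $\mathcal{C}$ of all unitary, Virasoro invariant, modular invariant 2D CFTs (any central charge $c>1$) satisfying $$\sum_{h+\bar h\leqslant\frac c{12}+\epsilon}n_{h,\bar h}e^{-(h+\bar h)\beta}\leqslant A(\beta)\ \ (\beta>2\pi),\qquad \tilde Z_L^{\rm Vir}(\alpha;\beta_L,\beta_R)\leqslant B(\beta_L,\beta_R)\ \ (\beta_L\beta_R>4\pi^2),$$ where $n_{h,\bar h}$ are Virasoro primary multiplicities. Then for each $(\beta_L,\beta_R)\in\mathcal{D}_\alpha$ there is a constant $K<\infty$, independent of the theory in $\mathcal{C}$ and of $c$, with $\left|\log Z(\beta_L,\beta_R)-\frac c{24}(\beta_L+\beta_R)\right|\leqslant K$ for all theories in $\mathcal{C}$; and for each $(\beta_L,\beta_R)$ with $(4\pi^2/\beta_L,4\pi^2/\beta_R)\in\mathcal{D}_\alpha$ there is such a constant $K$ with $\left|\log Z(\beta_L,\beta_R)-\frac{\pi^2c}{6}\left(\frac1{\beta_L}+\frac1{\beta_R}\right)\right|\leqslant K$ for all theories in $\mathcal{C}$.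
   Context: Let $\eta(\beta)=e^{-\beta/24}\prod_{n\geqslant1}(1-e^{-n\beta})$. A unitary, Virasoro invariant, modular invariant 2D CFT with central charge $c>1$ is given by a countable set of Virasoro primary weights $(h,\bar h)$, $h,\bar h\geqslant0$, with multiplicities $n_{h,\bar h}\in\mathbb{N}$, where the vacuum $(0,0)$ has multiplicity $1$ (normalizable vacuum) and primaries with $h=0$ or $\bar h=0$ other than the vacuum have the form $(J,0)$ or $(0,J)$ with $J$ a positive integer; the partition function is $Z(\beta_L,\beta_R)=\sum n_{h,\bar h}\chi_h(\beta_L)\chi_{\bar h}(\beta_R)$ with $\chi_0(\beta)=\frac{e^{\frac{c-1}{24}\beta}}{\eta(\beta)}(1-e^{-\beta})$ and $\chi_h(\beta)=\frac{e^{\frac{c-1}{24}\beta}}{\eta(\beta)}e^{-h\beta}$ for $h>0$; $Z$ is finite for all $\beta_L,\beta_R>0$ and $Z(\beta_L,\beta_R)=Z(4\pi^2/\beta_L,4\pi^2/\beta_R)$. Define $$\tilde Z_L^{\rm Vir}(\alpha;\beta_L,\beta_R)=(1-e^{-\beta_L})(1-e^{-\beta_R})+\sum_{0<\min(h,\bar h)<\frac{\alpha(c-1)}{24}}n_{h,\bar h}e^{-h\beta_L-\bar h\beta_R}+\sum_{J\geqslant1}n_{J,0}e^{-J\beta_L}(1-e^{-\beta_R})+\sum_{J\geqslant1}n_{0,J}(1-e^{-\beta_L})e^{-J\beta_R}.$$ Let $\phi_\alpha(\beta)=\max\left\{\frac{4\pi^2}{\beta},\ \frac12\left(\alpha(4\pi-\beta)+\sqrt{\alpha^2(4\pi-\beta)^2+16\pi^2(1-\alpha)}\right)\right\}$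 and $\mathcal{D}_\alpha=\{\beta_R>2\pi,\ \beta_L>\phi_\alpha(\beta_R)\}\cup\{\beta_L>2\pi,\ \beta_R>\phi_\alpha(\beta_L)\}$. *)

theory Defs
  imports "HOL-Analysis.Analysis"
begin

definition eta :: "real \<Rightarrow> real" where
  "eta \<beta> = exp (-\<beta>/24) * (\<Prod>n. (1 - exp (- real (Suc n) * \<beta>)))"

definition vchi :: "real \<Rightarrow> real \<Rightarrow> real \<Rightarrow> real" where
  "vchi c h \<beta> = exp ((c - 1) / 24 * \<beta>) / eta \<beta> *
      (if h = 0 then 1 - exp (-\<beta>) else exp (- h * \<beta>))"

text \<open>A theory is given by its central charge c and the multiplicity function
  n of Virasoro primaries (h, hbar); n p = 0 means p is not in the spectrum.\<close>
definition Zpart :: "real \<Rightarrow> (real \<times> real \<Rightarrow> nat) \<Rightarrow> real \<Rightarrow> real \<Rightarrow> real" where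
  "Zpart c n \<beta>L \<beta>R = (\<Sum>\<^sub>\<infinity>p\<in>UNIV. real (n p) * vchi c (fst p) \<beta>L * vchi c (snd p) \<beta>R)"

definition is_CFT :: "real \<Rightarrow> (real \<times> real \<Rightarrow> nat) \<Rightarrow> bool" where
  "is_CFT c n \<longleftrightarrow>
     c > 1 \<and>
     countable {p. n p > 0} \<and>
     (\<forall>p. n p > 0 \<longrightarrow> fst p \<ge> 0 \<and> snd p \<ge> 0) \<and>
     n (0, 0) = 1 \<and>
     (\<forall>h hb. n (h, hb) > 0 \<and> (h = 0 \<or> hb = 0) \<and> (h, hb) \<noteq> (0, 0) \<longrightarrow>
        (hb = 0 \<and> (\<exists>J::nat. J \<ge> 1 \<and> h = real J)) \<or>
        (h = 0 \<and> (\<exists>J::nat. J \<ge> 1 \<and> hb = real J))) \<and>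
     (\<forall>\<beta>L \<beta>R. \<beta>L > 0 \<and> \<beta>R > 0 \<longrightarrow>
        (\<lambda>p. real (n p) * vchi c (fst p) \<beta>L * vchi c (snd p) \<beta>R) summable_on UNIV) \<and>
     (\<forall>\<beta>L \<beta>R. \<beta>L > 0 \<and> \<beta>R > 0 \<longrightarrow>
        Zpart c n \<beta>L \<beta>R = Zpart c n (4 * pi^2 / \<beta>L) (4 * pi^2 / \<beta>R))"

definition ZtildeL :: "real \<Rightarrow> real \<Rightarrow> (real \<times> real \<Rightarrow> nat) \<Rightarrow> real \<Rightarrow> real \<Rightarrow> real" where
  "ZtildeL \<alpha> c n \<beta>L \<beta>R =
     (1 - exp (-\<beta>L)) * (1 - exp (-\<beta>R))
     + (\<Sum>\<^sub>\<infinity>p\<in>{p. 0 < min (fst p) (snd p) \<and> min (fst p) (snd p) < \<alpha> * (c - 1) / 24}.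
          real (n p) * exp (- fst p * \<beta>L - snd p * \<beta>R))
     + (\<Sum>\<^sub>\<infinity>J\<in>{1::nat..}. real (n (real J, 0)) * exp (- real J * \<beta>L) * (1 - exp (-\<beta>R)))
     + (\<Sum>\<^sub>\<infinity>J\<in>{1::nat..}. real (n (0, real J)) * (1 - exp (-\<beta>L)) * exp (- real J * \<beta>R))"

definition phi :: "real \<Rightarrow> real \<Rightarrow> real" where
  "phi \<alpha> \<beta> = max (4 * pi^2 / \<beta>)
     ((\<alpha> * (4 * pi - \<beta>) + sqrt (\<alpha>^2 * (4 * pi - \<beta>)^2 + 16 * pi^2 * (1 - \<alpha>))) / 2)"

definition Dom :: "real \<Rightarrow> (real \<times> real) set" where
  "Dom \<alpha> = {(\<beta>L, \<beta>R). \<beta>R > 2 * pi \<and> \<beta>L > phi \<alpha> \<beta>R} \<union>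
            {(\<beta>L, \<beta>R). \<beta>L > 2 * pi \<and> \<beta>R > phi \<alpha> \<beta>L}"

definition in_class :: "real \<Rightarrow> real \<Rightarrow> (real \<Rightarrow> real) \<Rightarrow> (real \<Rightarrow> real \<Rightarrow> real)
    \<Rightarrow> real \<Rightarrow> (real \<times> real \<Rightarrow> nat) \<Rightarrow> bool" where
  "in_class \<alpha> \<epsilon> A B c n \<longleftrightarrow>
     is_CFT c n \<and>
     (\<forall>\<beta>. \<beta> > 2 * pi \<longrightarrow>
        (\<Sum>\<^sub>\<infinity>p\<in>{p. fst p + snd p \<le> c / 12 + \<epsilon>}.
           real (n p) * exp (- (fst p + snd p) * \<beta>)) \<le> A \<beta>) \<and>
     (\<forall>\<beta>L \<beta>R. \<beta>L > 0 \<and> \<beta>R > 0 \<and> \<beta>L * \<beta>R > 4 * pi^2 \<longrightarrow>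
        ZtildeL \<alpha> c n \<beta>L \<beta>R \<le> B \<beta>L \<beta>R)"

end

theory Submission
  imports Defs
begin

text \<open>Write \<open>Z = exp (c (\<beta>L + \<beta>R) / 24) Zred\<close>, where \<open>Zred\<close> sums the primaries against
  characters normalised by the Euler product, so that \<open>c\<close> enters \<open>Zred\<close> only through the
  spectrum. The vacuum term bounds \<open>Zred\<close> below independently of the theory, so it
  suffices to bound \<open>Zred\<close> above uniformly on the class.

  For \<open>\<beta>L, \<beta>R > 2\<pi>\<close>, monotonicity reduces this to the diagonal, where the states with
  \<open>h + hbar \<le> c/12 + \<epsilon>\<close> are controlled by \<open>A\<close> and, by modular invariance, the others
  contribute at most \<open>exp (-\<epsilon> (\<beta> - 4\<pi>\<^sup>2/\<beta>)) Zred(\<beta>, \<beta>)\<close>.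

  Elsewhere, split \<open>Zred(x, y)\<close> into light states, controlled by \<open>B\<close>, and heavy states with
  \<open>h, hbar \<ge> \<alpha> (c - 1)/24\<close>. For \<open>a \<le> x\<close>, \<open>b \<le> y\<close> the heavy part is at most
  \<open>exp (-\<alpha> (c - 1) (x + y - a - b)/24) Zred(a, b)\<close>, and
  \<open>Zred(a, b) = exp (c (p + q - a - b)/24) Zred(p, q)\<close> with \<open>p = 4\<pi>\<^sup>2/a\<close>, \<open>q = 4\<pi>\<^sup>2/b\<close>.
  The \<open>c\<close>-dependence cancels once \<open>\<alpha> (x + y) > psi p + psi q\<close>, where
  \<open>psi t = t - (1 - \<alpha>) 4\<pi>\<^sup>2/t\<close>, so a uniform bound transfers from \<open>(p, q)\<close> to \<open>(x, y)\<close>.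
  Starting beyond the self-dual point, each transfer raises \<open>psi\<close> by a fixed amount, so
  finitely many of them reach every point of \<open>Dom \<alpha>\<close>. The dual statement is the same
  bound read through modular invariance.\<close>

section \<open>Euler product and normalised characters\<close>

definition euler_prod :: "real \<Rightarrow> real" where
  "euler_prod \<beta> = (\<Prod>n. 1 - exp (- real (Suc n) * \<beta>))"

text \<open>For \<open>h = 0\<close> the factor \<open>1 - exp (-\<beta>)\<close> of the vacuum character cancels the first
  Euler factor, so the decay of its normalised character in \<open>\<beta>\<close> is the monotonicity
  of the remaining product.\<close>
definition euler_prod_tail :: "real \<Rightarrow> real" where
  "euler_prod_tail \<beta> = (\<Prod>n. 1 - exp (- real (Suc (Suc n)) * \<beta>))"

lemma eta_eq_euler_prod: "eta \<beta> = exp (- \<beta> / 24) * euler_prod \<beta>"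
  by (simp add: eta_def euler_prod_def)

lemma euler_factor_pos:
  assumes "\<beta> > 0"
  shows "0 < 1 - exp (- real (Suc n) * \<beta>)"
proof -
  have "exp (- (real (Suc n) * \<beta>)) < 1"
    using assms by simp
  then show ?thesis
    unfolding mult_minus_left by linarith
qed

lemma convergent_prod_euler:
  assumes "\<beta> > 0"
  shows "convergent_prod (\<lambda>n. 1 - exp (- real (Suc n) * \<beta>))"
proof -
  have geom: "\<bar>- exp (- real (Suc k) * \<beta>)\<bar> = exp (-\<beta>) * exp (-\<beta>) ^ k" for k
    by (simp add: exp_of_nat_mult[symmetric] algebra_simps flip: exp_add)
  have "summable (\<lambda>k. \<bar>- exp (- real (Suc k) * \<beta>)\<bar>)"
    unfolding geom using assms by (intro summable_mult summable_geometric) simp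
  moreover have "- exp (- real (Suc k) * \<beta>) \<noteq> -1" for k
    using euler_factor_pos[OF assms, of k] by linarith
  ultimately show ?thesis
    using summable_imp_convergent_prod_real by fastforce
qed

lemma convergent_prod_euler_tail:
  "\<beta> > 0 \<Longrightarrow> convergent_prod (\<lambda>n. 1 - exp (- real (Suc (Suc n)) * \<beta>))"
  using convergent_prod_euler convergent_prod_Suc_iff[of "\<lambda>n. 1 - exp (- real (Suc n) * \<beta>)"]
  by simp

lemma euler_prod_pos: "\<beta> > 0 \<Longrightarrow> euler_prod \<beta> > 0"
  unfolding euler_prod_def by (intro less_0_prodinf convergent_prod_euler euler_factor_pos)

lemma euler_prod_tail_pos: "\<beta> > 0 \<Longrightarrow> euler_prod_tail \<beta> > 0"
  unfolding euler_prod_tail_def by (intro less_0_prodinf convergent_prod_euler_tail euler_factor_pos)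

lemma euler_prod_eq_tail: "\<beta> > 0 \<Longrightarrow> euler_prod \<beta> = (1 - exp (-\<beta>)) * euler_prod_tail \<beta>"
  using prodinf_split_head[OF convergent_prod_euler, of \<beta>]
  unfolding euler_prod_def euler_prod_tail_def by simp

lemma euler_prod_tail_mono:
  assumes "0 < a" "a \<le> x"
  shows "euler_prod_tail a \<le> euler_prod_tail x"
proof -
  have has_prod: "(\<lambda>n. 1 - exp (- real (Suc (Suc n)) * \<beta>)) has_prod euler_prod_tail \<beta>"
    if "\<beta> > 0" for \<beta>
    using convergent_prod_euler_tail[OF that]
    by (simp add: euler_prod_tail_def convergent_prod_has_prod_iff)
  have "0 \<le> 1 - exp (- real (Suc (Suc n)) * a) \<and>
      1 - exp (- real (Suc (Suc n)) * a) \<le> 1 - exp (- real (Suc (Suc n)) * x)" for n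
    using euler_factor_pos[OF assms(1), of "Suc n"] assms by (auto intro: mult_left_mono)
  from prodinf_le[OF has_prod has_prod this] assms show ?thesis
    by (simp add: euler_prod_tail_def)
qed

lemma euler_prod_mono:
  assumes "0 < a" "a \<le> x"
  shows "euler_prod a \<le> euler_prod x"
  unfolding euler_prod_eq_tail[OF assms(1)] euler_prod_eq_tail[OF order.strict_trans2[OF assms]]
  using assms euler_prod_tail_mono[OF assms] euler_prod_tail_pos[OF assms(1)]
  by (intro mult_mono) auto

definition vir_weight :: "real \<Rightarrow> real \<Rightarrow> real" where
  "vir_weight h \<beta> = (if h = 0 then 1 - exp (-\<beta>) else exp (- h * \<beta>))"

definition norm_char :: "real \<Rightarrow> real \<Rightarrow> real" where
  "norm_char h \<beta> = vir_weight h \<beta> / euler_prod \<beta>"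

lemma vir_weight_pos: "\<beta> > 0 \<Longrightarrow> vir_weight h \<beta> > 0"
  by (simp add: vir_weight_def)

lemma vir_weight_le_exp: "\<beta> > 0 \<Longrightarrow> vir_weight h \<beta> \<le> exp (- h * \<beta>)"
  by (simp add: vir_weight_def)

lemma exp_le_vir_weight: "\<beta> > 0 \<Longrightarrow> (1 - exp (-\<beta>)) * exp (- h * \<beta>) \<le> vir_weight h \<beta>"
  by (simp add: vir_weight_def)

lemma norm_char_pos: "\<beta> > 0 \<Longrightarrow> norm_char h \<beta> > 0"
  by (simp add: norm_char_def vir_weight_pos euler_prod_pos)

lemma vchi_eq_norm_char:
  assumes "\<beta> > 0"
  shows "vchi c h \<beta> = exp (c / 24 * \<beta>) * norm_char h \<beta>"
proof -
  have "exp ((c - 1) / 24 * \<beta>) = exp (c / 24 * \<beta>) * exp (- \<beta> / 24)"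
    by (simp add: algebra_simps diff_divide_distrib flip: exp_add)
  then show ?thesis
    using euler_prod_pos[OF assms]
    by (simp add: vchi_def norm_char_def vir_weight_def eta_eq_euler_prod)
qed

lemma norm_char_decay:
  assumes "0 < a" "a \<le> x"
  shows "norm_char h x \<le> exp (- h * (x - a)) * norm_char h a"
proof (cases "h = 0")
  case True
  have "x > 0"
    using assms by simp
  then have "norm_char h x = 1 / euler_prod_tail x"
    using True euler_prod_eq_tail euler_prod_tail_pos by (simp add: norm_char_def vir_weight_def)
  also have "\<dots> \<le> 1 / euler_prod_tail a"
    using euler_prod_tail_mono[OF assms] euler_prod_tail_pos[OF assms(1)] by (simp add: frac_le)
  also have "\<dots> = norm_char h a"
    using True assms euler_prod_eq_tail euler_prod_tail_pos by (simp add: norm_char_def vir_weight_def)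
  finally show ?thesis
    using True by simp
next
  case False
  have "norm_char h x = exp (- h * x) / euler_prod x"
    using False by (simp add: norm_char_def vir_weight_def)
  also have "\<dots> \<le> exp (- h * x) / euler_prod a"
    using euler_prod_mono[OF assms] euler_prod_pos[OF assms(1)] by (simp add: frac_le)
  also have "\<dots> = exp (- h * (x - a)) * norm_char h a"
    using False by (simp add: norm_char_def vir_weight_def algebra_simps flip: exp_add)
  finally show ?thesis .
qed

definition Zred_term :: "(real \<times> real \<Rightarrow> nat) \<Rightarrow> real \<Rightarrow> real \<Rightarrow> real \<times> real \<Rightarrow> real" where
  "Zred_term n x y p = real (n p) * norm_char (fst p) x * norm_char (snd p) y"

definition Zred :: "(real \<times> real \<Rightarrow> nat) \<Rightarrow> real \<Rightarrow> real \<Rightarrow> real" where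
  "Zred n x y = (\<Sum>\<^sub>\<infinity>p. Zred_term n x y p)"

lemma is_CFT_weights_nonneg: "is_CFT c n \<Longrightarrow> n p > 0 \<Longrightarrow> fst p \<ge> 0 \<and> snd p \<ge> 0"
  unfolding is_CFT_def by blast

lemma Zred_term_nonneg: "x > 0 \<Longrightarrow> y > 0 \<Longrightarrow> Zred_term n x y p \<ge> 0"
  by (simp add: Zred_term_def norm_char_pos less_imp_le)

lemma Zred_term_decay:
  assumes "0 < a" "a \<le> x" "0 < b" "b \<le> y"
  shows "Zred_term n x y p \<le> exp (- fst p * (x - a) - snd p * (y - b)) * Zred_term n a b p"
proof -
  have "norm_char (fst p) x * norm_char (snd p) y \<le>
      (exp (- fst p * (x - a)) * norm_char (fst p) a) * (exp (- snd p * (y - b)) * norm_char (snd p) b)"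
    using assms norm_char_pos by (intro mult_mono norm_char_decay) (auto simp: less_imp_le)
  then have "real (n p) * (norm_char (fst p) x * norm_char (snd p) y) \<le>
      real (n p) * ((exp (- fst p * (x - a)) * norm_char (fst p) a) * (exp (- snd p * (y - b)) * norm_char (snd p) b))"
    by (rule mult_left_mono) simp
  moreover have "exp (- fst p * (x - a) - snd p * (y - b)) = exp (- fst p * (x - a)) * exp (- snd p * (y - b))"
    by (simp flip: exp_add)
  ultimately show ?thesis
    unfolding Zred_term_def by (simp only: mult_ac)
qed

lemma Zpart_term_eq:
  assumes "x > 0" "y > 0"
  shows "real (n p) * vchi c (fst p) x * vchi c (snd p) y = exp (c / 24 * (x + y)) * Zred_term n x y p"
  by (simp add: Zred_term_def vchi_eq_norm_char[OF assms(1)] vchi_eq_norm_char[OF assms(2)]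
      algebra_simps flip: exp_add)

lemma Zpart_eq_Zred:
  assumes "x > 0" "y > 0"
  shows "Zpart c n x y = exp (c / 24 * (x + y)) * Zred n x y"
  unfolding Zpart_def Zred_def Zpart_term_eq[OF assms] by (rule infsum_cmult_right')

lemma Zred_term_summable_on:
  assumes "is_CFT c n" "x > 0" "y > 0"
  shows "Zred_term n x y summable_on S"
proof -
  have "(\<lambda>p. exp (c / 24 * (x + y)) * Zred_term n x y p) summable_on UNIV"
    using assms unfolding is_CFT_def Zpart_term_eq[OF assms(2,3), symmetric] by blast
  then have "Zred_term n x y summable_on UNIV"
    by (subst (asm) summable_on_cmult_right') simp_all
  then show ?thesis
    by (rule summable_on_subset) simp
qed

lemma Zred_modular:
  assumes "is_CFT c n" "x > 0" "y > 0"
  shows "Zred n x y = exp (c / 24 * (4*pi^2/x + 4*pi^2/y - x - y)) * Zred n (4*pi^2/x) (4*pi^2/y)"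
proof -
  have "Zpart c n x y = Zpart c n (4*pi^2/x) (4*pi^2/y)"
    using assms unfolding is_CFT_def by blast
  then have "exp (c / 24 * (x + y)) * Zred n x y =
      exp (c / 24 * (4*pi^2/x + 4*pi^2/y)) * Zred n (4*pi^2/x) (4*pi^2/y)"
    using assms by (simp add: Zpart_eq_Zred)
  then have "Zred n x y =
      exp (c / 24 * (4*pi^2/x + 4*pi^2/y)) / exp (c / 24 * (x + y)) * Zred n (4*pi^2/x) (4*pi^2/y)"
    by (simp add: field_simps)
  also have "exp (c / 24 * (4*pi^2/x + 4*pi^2/y)) / exp (c / 24 * (x + y)) =
      exp (c / 24 * (4*pi^2/x + 4*pi^2/y - x - y))"
    by (simp add: algebra_simps flip: exp_diff)
  finally show ?thesis .
qed

lemma Zred_nonneg: "x > 0 \<Longrightarrow> y > 0 \<Longrightarrow> Zred n x y \<ge> 0"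
  unfolding Zred_def by (intro infsum_nonneg Zred_term_nonneg)

lemma Zred_split:
  assumes "is_CFT c n" "x > 0" "y > 0"
  shows "Zred n x y = (\<Sum>\<^sub>\<infinity>p\<in>S. Zred_term n x y p) + (\<Sum>\<^sub>\<infinity>p\<in>-S. Zred_term n x y p)"
  unfolding Zred_def
  using infsum_Un_disjoint[OF Zred_term_summable_on[OF assms] Zred_term_summable_on[OF assms], of S "-S"]
  by simp

lemma infsum_Zred_term_le_Zred:
  assumes "is_CFT c n" "x > 0" "y > 0"
  shows "(\<Sum>\<^sub>\<infinity>p\<in>S. Zred_term n x y p) \<le> Zred n x y"
  unfolding Zred_def using assms
  by (intro infsum_mono2 Zred_term_summable_on Zred_term_nonneg) auto

lemma Zred_ge_vacuum:
  assumes "is_CFT c n" "x > 0" "y > 0"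
  shows "norm_char 0 x * norm_char 0 y \<le> Zred n x y"
proof -
  have "n (0, 0) = 1"
    using assms unfolding is_CFT_def by blast
  then show ?thesis
    using infsum_Zred_term_le_Zred[OF assms, of "{(0, 0)}"] by (simp add: Zred_term_def)
qed

lemma infsum_Zred_term_decay:
  assumes "is_CFT c n" "0 < a" "a \<le> x" "0 < b" "b \<le> y"
    and "\<And>p. p \<in> S \<Longrightarrow> n p > 0 \<Longrightarrow> L \<le> fst p * (x - a) + snd p * (y - b)"
  shows "(\<Sum>\<^sub>\<infinity>p\<in>S. Zred_term n x y p) \<le> exp (- L) * (\<Sum>\<^sub>\<infinity>p\<in>S. Zred_term n a b p)"
proof -
  have "Zred_term n x y p \<le> exp (- L) * Zred_term n a b p" if "p \<in> S" for p
  proof (cases "n p > 0")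
    case True
    have "Zred_term n x y p \<le> exp (- fst p * (x - a) - snd p * (y - b)) * Zred_term n a b p"
      using assms by (intro Zred_term_decay) auto
    also have "\<dots> \<le> exp (- L) * Zred_term n a b p"
      using assms(6)[OF that True] assms(2,4)
      by (intro mult_right_mono Zred_term_nonneg) (auto simp: algebra_simps)
    finally show ?thesis .
  qed (simp add: Zred_term_def)
  then have "(\<Sum>\<^sub>\<infinity>p\<in>S. Zred_term n x y p) \<le> (\<Sum>\<^sub>\<infinity>p\<in>S. exp (- L) * Zred_term n a b p)"
    using assms by (intro infsum_mono summable_on_cmult_right Zred_term_summable_on) auto
  then show ?thesis
    by (simp add: infsum_cmult_right')
qed

lemma Zred_antimono:
  assumes "is_CFT c n" "0 < a" "a \<le> x" "0 < b" "b \<le> y"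
  shows "Zred n x y \<le> Zred n a b"
proof -
  have "n p > 0 \<Longrightarrow> 0 \<le> fst p * (x - a) + snd p * (y - b)" for p
    using assms is_CFT_weights_nonneg[OF assms(1), of p] by simp
  from infsum_Zred_term_decay[OF assms, of UNIV 0, OF this] show ?thesis
    by (simp add: Zred_def)
qed

section \<open>Light and heavy states\<close>

definition heavy_set :: "real \<Rightarrow> real \<Rightarrow> (real \<times> real) set" where
  "heavy_set \<alpha> c = {p. \<alpha> * (c - 1) / 24 \<le> fst p \<and> \<alpha> * (c - 1) / 24 \<le> snd p}"

definition light_set :: "real \<Rightarrow> real \<Rightarrow> (real \<times> real) set" where
  "light_set \<alpha> c = {(0, 0)}
     \<union> {p. 0 < min (fst p) (snd p) \<and> min (fst p) (snd p) < \<alpha> * (c - 1) / 24}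
     \<union> (\<lambda>J::nat. (real J, 0)) ` {1..} \<union> (\<lambda>J::nat. (0, real J)) ` {1..}"

lemma light_support:
  assumes "is_CFT c n" "n p > 0" "p \<notin> heavy_set \<alpha> c"
  shows "p \<in> light_set \<alpha> c"
proof -
  obtain h hb where p: "p = (h, hb)"
    by (cases p)
  have "h \<ge> 0" "hb \<ge> 0" "min h hb < \<alpha> * (c - 1) / 24"
    using assms is_CFT_weights_nonneg[OF assms(1,2)] by (auto simp: p heavy_set_def)
  moreover have "(hb = 0 \<and> (\<exists>J::nat. J \<ge> 1 \<and> h = real J)) \<or> (h = 0 \<and> (\<exists>J::nat. J \<ge> 1 \<and> hb = real J))"
    if "h = 0 \<or> hb = 0" "(h, hb) \<noteq> (0, 0)"
    using assms(1,2) that unfolding is_CFT_def p by blast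
  ultimately show ?thesis
    unfolding light_set_def p by (cases "min h hb > 0") (auto simp: image_iff)
qed

lemma vir_weight_term_eq:
  assumes "x > 0" "y > 0"
  shows "real (n p) * vir_weight (fst p) x * vir_weight (snd p) y =
    euler_prod x * euler_prod y * Zred_term n x y p"
  using euler_prod_pos[OF assms(1)] euler_prod_pos[OF assms(2)]
  by (simp add: Zred_term_def norm_char_def)

lemma ZtildeL_eq_infsum:
  assumes "is_CFT c n" "x > 0" "y > 0"
  shows "ZtildeL \<alpha> c n x y =
    (\<Sum>\<^sub>\<infinity>p\<in>light_set \<alpha> c. real (n p) * vir_weight (fst p) x * vir_weight (snd p) y)"
proof -
  define u where "u = (\<lambda>p. real (n p) * vir_weight (fst p) x * vir_weight (snd p) y)"
  define M where "M = {p. 0 < min (fst p) (snd p) \<and> min (fst p) (snd p) < \<alpha> * (c - 1) / 24}"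
  define JL where "JL = (\<lambda>J::nat. (real J, 0::real)) ` {1..}"
  define JR where "JR = (\<lambda>J::nat. (0::real, real J)) ` {1..}"
  have summable: "u summable_on S" for S
    unfolding u_def vir_weight_term_eq[OF assms(2,3)]
    by (intro summable_on_cmult_right Zred_term_summable_on[OF assms])
  have "infsum u (light_set \<alpha> c) = infsum u {(0, 0)} + infsum u M + infsum u JL + infsum u JR"
    unfolding light_set_def M_def[symmetric] JL_def[symmetric] JR_def[symmetric]
    by (subst infsum_Un_disjoint, (auto simp: summable M_def JL_def JR_def)[3])+ simp
  moreover have "infsum u {(0, 0)} = (1 - exp (-x)) * (1 - exp (-y))"
    using assms(1) unfolding is_CFT_def by (simp add: u_def vir_weight_def)
  moreover have "infsum u M = (\<Sum>\<^sub>\<infinity>p\<in>M. real (n p) * exp (- fst p * x - snd p * y))"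
  proof (intro infsum_cong)
    fix p assume "p \<in> M"
    then have "fst p \<noteq> 0" "snd p \<noteq> 0"
      by (auto simp: M_def)
    moreover have "exp (- fst p * x - snd p * y) = exp (- fst p * x) * exp (- snd p * y)"
      by (simp flip: exp_add)
    ultimately show "u p = real (n p) * exp (- fst p * x - snd p * y)"
      by (simp add: u_def vir_weight_def)
  qed
  moreover have "inj_on (\<lambda>J::nat. (real J, 0::real)) {1..}" "inj_on (\<lambda>J::nat. (0::real, real J)) {1..}"
    by (auto simp: inj_on_def)
  then have "infsum u JL = (\<Sum>\<^sub>\<infinity>J\<in>{1::nat..}. real (n (real J, 0)) * exp (- real J * x) * (1 - exp (-y)))"
    and "infsum u JR = (\<Sum>\<^sub>\<infinity>J\<in>{1::nat..}. real (n (0, real J)) * (1 - exp (-x)) * exp (- real J * y))"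
    unfolding JL_def JR_def by (auto simp: infsum_reindex u_def vir_weight_def intro!: infsum_cong)
  ultimately show ?thesis
    unfolding ZtildeL_def M_def u_def by simp
qed

lemma infsum_light_le_ZtildeL:
  assumes "is_CFT c n" "x > 0" "y > 0"
  shows "(\<Sum>\<^sub>\<infinity>p\<in>-heavy_set \<alpha> c. Zred_term n x y p) \<le>
    ZtildeL \<alpha> c n x y / (euler_prod x * euler_prod y)"
proof -
  define P where "P = euler_prod x * euler_prod y"
  define u where "u = (\<lambda>p. real (n p) * vir_weight (fst p) x * vir_weight (snd p) y)"
  have u_eq: "u = (\<lambda>p. P * Zred_term n x y p)"
    unfolding u_def P_def vir_weight_term_eq[OF assms(2,3)] ..
  have "P > 0"
    using euler_prod_pos assms(2,3) by (simp add: P_def)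
  have "n p = 0" if "p \<notin> heavy_set \<alpha> c" "p \<notin> light_set \<alpha> c" for p
    using light_support[OF assms(1) _ that(1)] that(2) by auto
  then have "infsum u (-heavy_set \<alpha> c) \<le> infsum u (light_set \<alpha> c)"
    using assms(2,3) \<open>P > 0\<close> unfolding u_eq
    by (intro infsum_mono_neutral summable_on_cmult_right Zred_term_summable_on[OF assms])
      (auto simp: Zred_term_def norm_char_pos less_imp_le)
  also have "\<dots> = ZtildeL \<alpha> c n x y"
    unfolding u_def by (rule ZtildeL_eq_infsum[OF assms, symmetric])
  finally have "P * (\<Sum>\<^sub>\<infinity>p\<in>-heavy_set \<alpha> c. Zred_term n x y p) \<le> ZtildeL \<alpha> c n x y"
    unfolding u_eq infsum_cmult_right' .
  then show ?thesis
    using \<open>P > 0\<close> by (simp add: P_def pos_le_divide_eq mult_ac)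
qed

lemma infsum_heavy_le:
  assumes "is_CFT c n" "0 < a" "a \<le> x" "0 < b" "b \<le> y"
  shows "(\<Sum>\<^sub>\<infinity>p\<in>heavy_set \<alpha> c. Zred_term n x y p) \<le>
    exp (- (\<alpha> * (c - 1) / 24) * (x + y - a - b)) * Zred n a b"
proof -
  define q where "q = \<alpha> * (c - 1) / 24"
  have "q * (x + y - a - b) \<le> fst p * (x - a) + snd p * (y - b)" if "p \<in> heavy_set \<alpha> c" for p
  proof -
    have "q \<le> fst p" "q \<le> snd p"
      using that by (auto simp: heavy_set_def q_def)
    then have "q * (x - a) \<le> fst p * (x - a)" "q * (y - b) \<le> snd p * (y - b)"
      using assms by (auto intro: mult_right_mono)
    then show ?thesis
      by (simp add: algebra_simps)
  qed
  then have "(\<Sum>\<^sub>\<infinity>p\<in>heavy_set \<alpha> c. Zred_term n x y p) \<le>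
      exp (- (q * (x + y - a - b))) * (\<Sum>\<^sub>\<infinity>p\<in>heavy_set \<alpha> c. Zred_term n a b p)"
    by (intro infsum_Zred_term_decay[OF assms])
  also have "\<dots> \<le> exp (- (q * (x + y - a - b))) * Zred n a b"
    using assms by (intro mult_left_mono infsum_Zred_term_le_Zred) auto
  finally show ?thesis
    by (simp add: q_def)
qed

section \<open>Beyond the self-dual point\<close>

lemma exp_weight_summable_on:
  assumes "is_CFT c n" "\<sigma> > 0"
  shows "(\<lambda>p. real (n p) * exp (- (fst p + snd p) * \<sigma>)) summable_on S"
proof (rule summable_on_comparison_test)
  define k where "k = euler_prod \<sigma> ^ 2 / (1 - exp (-\<sigma>)) ^ 2"
  show "(\<lambda>p. k * Zred_term n \<sigma> \<sigma> p) summable_on S"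
    by (intro summable_on_cmult_right Zred_term_summable_on[OF assms(1,2,2)])
  fix p
  have "(1 - exp (-\<sigma>)) ^ 2 * (real (n p) * exp (- (fst p + snd p) * \<sigma>)) =
      real (n p) * (((1 - exp (-\<sigma>)) * exp (- fst p * \<sigma>)) * ((1 - exp (-\<sigma>)) * exp (- snd p * \<sigma>)))"
    by (simp add: power2_eq_square algebra_simps flip: exp_add)
  also have "\<dots> \<le> real (n p) * (vir_weight (fst p) \<sigma> * vir_weight (snd p) \<sigma>)"
    using assms(2)
    by (intro mult_left_mono mult_mono exp_le_vir_weight) (auto simp: less_imp_le vir_weight_pos)
  also have "\<dots> = euler_prod \<sigma> ^ 2 * Zred_term n \<sigma> \<sigma> p"
    using vir_weight_term_eq[OF assms(2) assms(2)] by (simp add: power2_eq_square mult.assoc)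
  finally show "real (n p) * exp (- (fst p + snd p) * \<sigma>) \<le> k * Zred_term n \<sigma> \<sigma> p"
    using assms(2) by (simp add: k_def field_simps)
  show "0 \<le> real (n p) * exp (- (fst p + snd p) * \<sigma>)"
    by simp
qed

lemma dual_less_self:
  assumes "\<sigma> > 2 * pi"
  shows "0 < 4*pi^2/\<sigma>" "4*pi^2/\<sigma> < \<sigma>"
proof -
  have "\<sigma> > 0"
    using assms pi_gt_zero by linarith
  then show "0 < 4*pi^2/\<sigma>"
    by simp
  have "(2*pi) * (2*pi) < \<sigma> * \<sigma>"
    using mult_strict_mono[OF assms assms] pi_gt_zero \<open>\<sigma> > 0\<close> by simp
  then show "4*pi^2/\<sigma> < \<sigma>"
    using \<open>\<sigma> > 0\<close> by (simp add: divide_less_eq power2_eq_square algebra_simps)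
qed

lemma infsum_low_le_A:
  assumes "in_class \<alpha> \<epsilon> A B c n" "\<sigma> > 2 * pi"
  shows "(\<Sum>\<^sub>\<infinity>p\<in>{p. fst p + snd p \<le> c / 12 + \<epsilon>}. Zred_term n \<sigma> \<sigma> p) \<le> A \<sigma> / euler_prod \<sigma> ^ 2"
proof -
  define low where "low = {p :: real \<times> real. fst p + snd p \<le> c / 12 + \<epsilon>}"
  define P where "P = euler_prod \<sigma> ^ 2"
  have cft: "is_CFT c n"
    using assms(1) unfolding in_class_def by blast
  have "\<sigma> > 0"
    using assms(2) pi_gt_zero by linarith
  then have "P > 0"
    using euler_prod_pos[OF \<open>\<sigma> > 0\<close>] by (simp add: P_def)
  have "(\<Sum>\<^sub>\<infinity>p\<in>low. Zred_term n \<sigma> \<sigma> p) \<le>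
      (\<Sum>\<^sub>\<infinity>p\<in>low. inverse P * (real (n p) * exp (- (fst p + snd p) * \<sigma>)))"
  proof (intro infsum_mono Zred_term_summable_on[OF cft \<open>\<sigma> > 0\<close> \<open>\<sigma> > 0\<close>]
      summable_on_cmult_right exp_weight_summable_on[OF cft \<open>\<sigma> > 0\<close>])
    fix p
    have "P * Zred_term n \<sigma> \<sigma> p = real (n p) * (vir_weight (fst p) \<sigma> * vir_weight (snd p) \<sigma>)"
      using vir_weight_term_eq[OF \<open>\<sigma> > 0\<close> \<open>\<sigma> > 0\<close>, of n p] by (simp add: P_def power2_eq_square)
    also have "\<dots> \<le> real (n p) * (exp (- fst p * \<sigma>) * exp (- snd p * \<sigma>))"
      using \<open>\<sigma> > 0\<close>
      by (intro mult_left_mono mult_mono vir_weight_le_exp) (auto simp: less_imp_le vir_weight_pos)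
    also have "\<dots> = real (n p) * exp (- (fst p + snd p) * \<sigma>)"
      by (simp add: algebra_simps flip: exp_add)
    finally show "Zred_term n \<sigma> \<sigma> p \<le> inverse P * (real (n p) * exp (- (fst p + snd p) * \<sigma>))"
      using \<open>P > 0\<close> by (simp add: field_simps)
  qed
  also have "\<dots> = inverse P * (\<Sum>\<^sub>\<infinity>p\<in>low. real (n p) * exp (- (fst p + snd p) * \<sigma>))"
    by (rule infsum_cmult_right')
  also have "\<dots> \<le> inverse P * A \<sigma>"
    using assms \<open>P > 0\<close> unfolding in_class_def low_def by (intro mult_left_mono) auto
  finally show ?thesis
    by (simp add: low_def P_def field_simps)
qed

lemma infsum_high_le_diag:
  assumes "is_CFT c n" "\<sigma> > 2 * pi"
  shows "(\<Sum>\<^sub>\<infinity>p\<in>-{p. fst p + snd p \<le> c / 12 + \<epsilon>}. Zred_term n \<sigma> \<sigma> p) \<le>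
    exp (- \<epsilon> * (\<sigma> - 4*pi^2/\<sigma>)) * Zred n \<sigma> \<sigma>"
proof -
  define \<sigma>' where "\<sigma>' = 4*pi^2/\<sigma>"
  define high where "high = -{p :: real \<times> real. fst p + snd p \<le> c / 12 + \<epsilon>}"
  have "\<sigma>' > 0" "\<sigma>' < \<sigma>"
    using dual_less_self[OF assms(2)] by (simp_all add: \<sigma>'_def)
  then have "\<sigma> > 0"
    by linarith
  have "(\<Sum>\<^sub>\<infinity>p\<in>high. Zred_term n \<sigma> \<sigma> p) \<le>
      exp (- ((c / 12 + \<epsilon>) * (\<sigma> - \<sigma>'))) * (\<Sum>\<^sub>\<infinity>p\<in>high. Zred_term n \<sigma>' \<sigma>' p)"
  proof (intro infsum_Zred_term_decay[OF assms(1)])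
    fix p assume "p \<in> high"
    then have "(c / 12 + \<epsilon>) * (\<sigma> - \<sigma>') \<le> (fst p + snd p) * (\<sigma> - \<sigma>')"
      using \<open>\<sigma>' < \<sigma>\<close> by (intro mult_right_mono) (auto simp: high_def)
    then show "(c / 12 + \<epsilon>) * (\<sigma> - \<sigma>') \<le> fst p * (\<sigma> - \<sigma>') + snd p * (\<sigma> - \<sigma>')"
      by (simp add: algebra_simps)
  qed (use \<open>\<sigma>' > 0\<close> \<open>\<sigma>' < \<sigma>\<close> in auto)
  also have "\<dots> \<le> exp (- ((c / 12 + \<epsilon>) * (\<sigma> - \<sigma>'))) * Zred n \<sigma>' \<sigma>'"
    using \<open>\<sigma>' > 0\<close> by (intro mult_left_mono infsum_Zred_term_le_Zred[OF assms(1)]) auto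
  also have "Zred n \<sigma>' \<sigma>' = exp (c / 12 * (\<sigma> - \<sigma>')) * Zred n \<sigma> \<sigma>"
  proof -
    have "Zred n \<sigma> \<sigma> = exp (c / 24 * (\<sigma>' + \<sigma>' - \<sigma> - \<sigma>)) * Zred n \<sigma>' \<sigma>'"
      unfolding \<sigma>'_def by (rule Zred_modular[OF assms(1) \<open>\<sigma> > 0\<close> \<open>\<sigma> > 0\<close>])
    moreover have "exp (c / 12 * (\<sigma> - \<sigma>')) * exp (c / 24 * (\<sigma>' + \<sigma>' - \<sigma> - \<sigma>)) = 1"
      by (simp add: field_simps flip: exp_add)
    ultimately show ?thesis
      by (metis mult.assoc mult_1)
  qed
  also have "exp (- ((c / 12 + \<epsilon>) * (\<sigma> - \<sigma>'))) * (exp (c / 12 * (\<sigma> - \<sigma>')) * Zred n \<sigma> \<sigma>) =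
      exp (- \<epsilon> * (\<sigma> - \<sigma>')) * Zred n \<sigma> \<sigma>"
    by (simp add: algebra_simps flip: exp_add)
  finally show ?thesis
    by (simp add: high_def \<sigma>'_def)
qed

lemma Zred_diag_le:
  assumes "in_class \<alpha> \<epsilon> A B c n" "\<sigma> > 2 * pi" "\<epsilon> > 0"
  shows "Zred n \<sigma> \<sigma> \<le> A \<sigma> / (euler_prod \<sigma> ^ 2 * (1 - exp (- \<epsilon> * (\<sigma> - 4*pi^2/\<sigma>))))"
proof -
  have cft: "is_CFT c n"
    using assms(1) unfolding in_class_def by blast
  have "\<sigma> > 0"
    using assms(2) pi_gt_zero by linarith
  then have "euler_prod \<sigma> ^ 2 > 0"
    using euler_prod_pos[OF \<open>\<sigma> > 0\<close>] by simp
  have "(1 - exp (- \<epsilon> * (\<sigma> - 4*pi^2/\<sigma>))) * Zred n \<sigma> \<sigma> \<le> A \<sigma> / euler_prod \<sigma> ^ 2"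
    using infsum_low_le_A[OF assms(1,2)] infsum_high_le_diag[OF cft assms(2), of \<epsilon>]
      Zred_split[OF cft \<open>\<sigma> > 0\<close> \<open>\<sigma> > 0\<close>, of "{p. fst p + snd p \<le> c / 12 + \<epsilon>}"]
    by (simp add: algebra_simps)
  moreover have "exp (- \<epsilon> * (\<sigma> - 4*pi^2/\<sigma>)) < 1"
    using assms(3) dual_less_self[OF assms(2)] by simp
  ultimately show ?thesis
    using \<open>euler_prod \<sigma> ^ 2 > 0\<close> by (simp add: pos_le_divide_eq mult_ac)
qed

section \<open>Transfer of uniform bounds\<close>

definition uniformly_bounded ::
    "real \<Rightarrow> real \<Rightarrow> (real \<Rightarrow> real) \<Rightarrow> (real \<Rightarrow> real \<Rightarrow> real) \<Rightarrow> real \<Rightarrow> real \<Rightarrow> bool" where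
  "uniformly_bounded \<alpha> \<epsilon> A B x y \<longleftrightarrow> (\<exists>K. \<forall>c n. in_class \<alpha> \<epsilon> A B c n \<longrightarrow> Zred n x y \<le> K)"

lemma uniformly_bounded_beyond_self_dual:
  assumes "\<epsilon> > 0" "x > 2 * pi" "y > 2 * pi"
  shows "uniformly_bounded \<alpha> \<epsilon> A B x y"
proof -
  define m where "m = min x y"
  have "m > 2 * pi" "m \<le> x" "m \<le> y"
    using assms by (auto simp: m_def)
  moreover have "m > 0"
    using \<open>m > 2 * pi\<close> pi_gt_zero by linarith
  ultimately have "Zred n x y \<le> A m / (euler_prod m ^ 2 * (1 - exp (- \<epsilon> * (m - 4*pi^2/m))))"
    if "in_class \<alpha> \<epsilon> A B c n" for c n
  proof -
    have "Zred n x y \<le> Zred n m m"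
      using that \<open>m > 0\<close> \<open>m \<le> x\<close> \<open>m \<le> y\<close> unfolding in_class_def by (blast intro: Zred_antimono)
    also have "\<dots> \<le> A m / (euler_prod m ^ 2 * (1 - exp (- \<epsilon> * (m - 4*pi^2/m))))"
      by (rule Zred_diag_le[OF that \<open>m > 2 * pi\<close> assms(1)])
    finally show ?thesis .
  qed
  then show ?thesis
    unfolding uniformly_bounded_def by blast
qed

definition psi :: "real \<Rightarrow> real \<Rightarrow> real" where
  "psi \<alpha> t = t - (1 - \<alpha>) * (4 * pi^2 / t)"

lemma strict_mono_psi: "\<alpha> \<le> 1 \<Longrightarrow> strict_mono_on {0<..} (psi \<alpha>)"
proof (rule strict_mono_onI)
  fix s t :: real
  assume "\<alpha> \<le> 1" "s \<in> {0<..}" "t \<in> {0<..}" "s < t"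
  then have "(1 - \<alpha>) * (4*pi^2/t) \<le> (1 - \<alpha>) * (4*pi^2/s)"
    by (intro mult_left_mono) (auto simp: frac_le)
  then show "psi \<alpha> s < psi \<alpha> t"
    using \<open>s < t\<close> by (simp add: psi_def)
qed

lemma psi_less_iff: "\<alpha> \<le> 1 \<Longrightarrow> s > 0 \<Longrightarrow> t > 0 \<Longrightarrow> psi \<alpha> s < psi \<alpha> t \<longleftrightarrow> s < t"
  using strict_mono_on_less[OF strict_mono_psi] by simp

lemma psi_2pi: "psi \<alpha> (2*pi) = 2*pi*\<alpha>"
  by (simp add: psi_def power2_eq_square field_simps)

lemma psi_dual: "t > 0 \<Longrightarrow> psi \<alpha> (4*pi^2/t) = 4*pi^2/t - (1 - \<alpha>) * t"
  by (simp add: psi_def)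

lemma psi_surj:
  assumes "\<alpha> \<le> 1" "r > 0 \<or> \<alpha> < 1"
  obtains w where "w > 0" "psi \<alpha> w = r"
proof
  define s where "s = sqrt (r^2 + 16*pi^2*(1 - \<alpha>))"
  have "r^2 + 16*pi^2*(1 - \<alpha>) \<ge> 0"
    using assms(1) by (simp add: add_nonneg_nonneg)
  then have s2: "s^2 = r^2 + 16*pi^2*(1 - \<alpha>)" and "s \<ge> 0"
    by (simp_all add: s_def)
  have "s > - r"
  proof (cases "r > 0")
    case False
    then have "s^2 > r^2"
      using assms s2 by simp
    then show ?thesis
      using power_less_imp_less_base[of "-r" 2 s] \<open>s \<ge> 0\<close> by simp
  qed (use \<open>s \<ge> 0\<close> in linarith)
  then show "(r + s) / 2 > 0"
    by simp
  then have "((r + s) / 2) * ((r + s) / 2) - r * ((r + s) / 2) = 4*pi^2*(1 - \<alpha>)"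
    using s2 by (simp add: power2_eq_square field_simps)
  then show "psi \<alpha> ((r + s) / 2) = r"
    using \<open>(r + s) / 2 > 0\<close> unfolding psi_def by (simp add: field_simps)
qed

lemma psi_add_le:
  assumes "0 \<le> \<alpha>" "\<alpha> \<le> 1" "t \<ge> 2*pi" "\<delta> > 0"
  shows "psi \<alpha> (t + \<delta>) \<le> psi \<alpha> t + 2 * \<delta>"
proof -
  have "t > 0"
    using assms(3) pi_gt_zero by linarith
  have "(2*pi) * (2*pi) \<le> t * (t + \<delta>)"
    using assms \<open>t > 0\<close> by (intro mult_mono) auto
  then have "4*pi^2 * \<delta> \<le> \<delta> * (t * (t + \<delta>))"
    using assms(4) by (simp add: power2_eq_square)
  then have "4*pi^2 * \<delta> / (t * (t + \<delta>)) \<le> \<delta>"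
    using \<open>t > 0\<close> assms(4) by (simp add: pos_divide_le_eq)
  moreover have "4*pi^2/t - 4*pi^2/(t + \<delta>) = 4*pi^2 * \<delta> / (t * (t + \<delta>))"
    using \<open>t > 0\<close> assms(4) by (simp add: field_simps)
  ultimately have "4*pi^2/t - 4*pi^2/(t + \<delta>) \<le> \<delta>"
    by simp
  moreover have "0 \<le> 4*pi^2/t - 4*pi^2/(t + \<delta>)"
    using \<open>t > 0\<close> assms(4) by (simp add: frac_le)
  ultimately have "(1 - \<alpha>) * (4*pi^2/t - 4*pi^2/(t + \<delta>)) \<le> 1 * \<delta>"
    using assms by (intro mult_mono) auto
  then show ?thesis
    by (simp add: psi_def algebra_simps)
qed

lemma two_pi_le_dual: "0 < u \<Longrightarrow> u \<le> 2*pi \<Longrightarrow> 2*pi \<le> 4*pi^2/u"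
  using mult_left_mono[of u "2*pi" "2*pi"] by (simp add: le_divide_eq power2_eq_square)

lemma dual_le_two_pi:
  assumes "2*pi \<le> v"
  shows "4*pi^2/v \<le> 2*pi"
proof -
  have "v > 0"
    using assms pi_gt_zero by linarith
  have "2*pi * (2*pi) \<le> 2*pi * v"
    using assms by (intro mult_left_mono) auto
  then show ?thesis
    using \<open>v > 0\<close> by (simp add: divide_le_eq power2_eq_square)
qed

lemma four_pi2_less_mult_of_gap: "0 < u \<Longrightarrow> 0 < \<alpha> * (v - 4*pi^2/u) \<Longrightarrow> \<alpha> > 0 \<Longrightarrow> u * v > 4*pi^2"
  by (simp add: zero_less_mult_iff divide_less_eq mult.commute)

lemma psi_add_gap: "u + \<alpha> * v - 4*pi^2/u = psi \<alpha> u + \<alpha> * (v - 4*pi^2/u)"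
  unfolding psi_def by (simp add: algebra_simps diff_divide_distrib)

lemma Zred_le_transfer:
  assumes "in_class \<alpha> \<epsilon> A B c n" "x > 0" "y > 0" "p > 0" "q > 0"
    and "4*pi^2/p \<le> x" "4*pi^2/q \<le> y" "x * y > 4*pi^2"
    and "\<alpha> * (x + y) > psi \<alpha> p + psi \<alpha> q"
  shows "Zred n x y \<le> B x y / (euler_prod x * euler_prod y)
           + exp (\<alpha> * (x + y - 4*pi^2/p - 4*pi^2/q) / 24) * Zred n p q"
proof -
  define a b where "a = 4*pi^2/p" and "b = 4*pi^2/q"
  define D where "D = x + y - a - b"
  have cft: "is_CFT c n" and "c > 1"
    using assms(1) unfolding in_class_def is_CFT_def by blast+
  have "a > 0" "b > 0" "4*pi^2/a = p" "4*pi^2/b = q"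
    using assms(4,5) by (auto simp: a_def b_def)
  have light: "(\<Sum>\<^sub>\<infinity>p\<in>-heavy_set \<alpha> c. Zred_term n x y p) \<le> B x y / (euler_prod x * euler_prod y)"
    using infsum_light_le_ZtildeL[OF cft assms(2,3)] assms(1-3,8) euler_prod_pos[OF assms(2)]
      euler_prod_pos[OF assms(3)] unfolding in_class_def
    by (smt (verit) divide_right_mono mult_pos_pos)
  have "psi \<alpha> p = p - (1 - \<alpha>) * a" "psi \<alpha> q = q - (1 - \<alpha>) * b"
    by (simp_all add: psi_def a_def b_def)
  then have "\<alpha> * D > p + q - a - b"
    using assms(9) unfolding D_def by (simp add: algebra_simps)
  then have "c * (p + q - a - b) \<le> c * (\<alpha> * D)"
    using \<open>c > 1\<close> by (intro mult_left_mono) auto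
  then have "0 \<le> (c * (\<alpha> * D) - c * (p + q - a - b)) / 24"
    by simp
  moreover have "- (\<alpha> * (c - 1) / 24) * D + c / 24 * (p + q - a - b) =
      \<alpha> * D / 24 - (c * (\<alpha> * D) - c * (p + q - a - b)) / 24"
    by (simp add: field_simps)
  ultimately have exponent: "- (\<alpha> * (c - 1) / 24) * D + c / 24 * (p + q - a - b) \<le> \<alpha> * D / 24"
    by linarith
  have "(\<Sum>\<^sub>\<infinity>p\<in>heavy_set \<alpha> c. Zred_term n x y p) \<le> exp (- (\<alpha> * (c - 1) / 24) * D) * Zred n a b"
    unfolding D_def using \<open>a > 0\<close> \<open>b > 0\<close> assms(6,7) by (intro infsum_heavy_le[OF cft]) (auto simp: a_def b_def)
  also have "\<dots> = exp (- (\<alpha> * (c - 1) / 24) * D + c / 24 * (p + q - a - b)) * Zred n p q"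
    using Zred_modular[OF cft \<open>a > 0\<close> \<open>b > 0\<close>]
    by (simp only: \<open>4*pi^2/a = p\<close> \<open>4*pi^2/b = q\<close> exp_add mult.assoc)
  also have "\<dots> \<le> exp (\<alpha> * D / 24) * Zred n p q"
    using exponent Zred_nonneg[OF assms(4,5)] by (intro mult_right_mono) auto
  finally show ?thesis
    using light Zred_split[OF cft assms(2,3), of "heavy_set \<alpha> c"] by (simp add: D_def a_def b_def)
qed

lemma uniformly_bounded_transfer:
  assumes "uniformly_bounded \<alpha> \<epsilon> A B p q" "x > 0" "y > 0" "p > 0" "q > 0"
    and "4*pi^2/p \<le> x" "4*pi^2/q \<le> y" "x * y > 4*pi^2"
    and "\<alpha> * (x + y) > psi \<alpha> p + psi \<alpha> q"
  shows "uniformly_bounded \<alpha> \<epsilon> A B x y"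
proof -
  obtain K where K: "\<And>c n. in_class \<alpha> \<epsilon> A B c n \<Longrightarrow> Zred n p q \<le> K"
    using assms(1) unfolding uniformly_bounded_def by blast
  define E where "E = exp (\<alpha> * (x + y - 4*pi^2/p - 4*pi^2/q) / 24)"
  have "Zred n x y \<le> B x y / (euler_prod x * euler_prod y) + E * K" if "in_class \<alpha> \<epsilon> A B c n" for c n
  proof -
    have "E * Zred n p q \<le> E * K"
      using K[OF that] by (simp add: E_def)
    then show ?thesis
      using Zred_le_transfer[OF that assms(2-)] unfolding E_def by linarith
  qed
  then show ?thesis
    unfolding uniformly_bounded_def by blast
qed

lemma uniformly_bounded_from_beyond_self_dual:
  assumes "0 \<le> \<alpha>" "\<alpha> \<le> 1" "\<epsilon> > 0" "x > 0" "y > 0" "x * y > 4*pi^2"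
    and "\<alpha> * (x + y) > psi \<alpha> (max (2*pi) (4*pi^2/x)) + psi \<alpha> (max (2*pi) (4*pi^2/y))"
  shows "uniformly_bounded \<alpha> \<epsilon> A B x y"
proof -
  define s t where "s = max (2*pi) (4*pi^2/x)" and "t = max (2*pi) (4*pi^2/y)"
  \<comment> \<open>Shifting \<open>(s, t)\<close> by \<open>\<delta>\<close> lands strictly beyond the self-dual point and, by
    psi_add_le, costs at most \<open>4\<delta>\<close> of the slack \<open>5\<delta>\<close>.\<close>
  define \<delta> where "\<delta> = (\<alpha> * (x + y) - psi \<alpha> s - psi \<alpha> t) / 5"
  have "\<delta> > 0"
    using assms(7) by (simp add: \<delta>_def s_def t_def)
  have "s + \<delta> > 2*pi" "t + \<delta> > 2*pi" "s + \<delta> > 0" "t + \<delta> > 0"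
    using \<open>\<delta> > 0\<close> pi_gt_zero unfolding s_def t_def by (smt (verit) max.cobounded1)+
  show ?thesis
  proof (rule uniformly_bounded_transfer[OF uniformly_bounded_beyond_self_dual[OF assms(3)]])
    have "4*pi^2/x \<le> s + \<delta>" "4*pi^2/y \<le> t + \<delta>"
      using \<open>\<delta> > 0\<close> unfolding s_def t_def by (smt (verit) max.cobounded2)+
    then show "4*pi^2/(s + \<delta>) \<le> x" "4*pi^2/(t + \<delta>) \<le> y"
      using assms(4,5) \<open>s + \<delta> > 0\<close> \<open>t + \<delta> > 0\<close> by (simp_all add: divide_le_eq mult.commute)
    have "s \<ge> 2*pi" "t \<ge> 2*pi" "5 * \<delta> = \<alpha> * (x + y) - psi \<alpha> s - psi \<alpha> t"
      by (simp_all add: s_def t_def \<delta>_def)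
    then show "\<alpha> * (x + y) > psi \<alpha> (s + \<delta>) + psi \<alpha> (t + \<delta>)"
      using psi_add_le[OF assms(1,2) _ \<open>\<delta> > 0\<close>] \<open>\<delta> > 0\<close> by (smt (verit))
  qed fact+
qed

section \<open>Iterating the transfer\<close>

text \<open>For \<open>u > 0\<close>, \<open>u * dom_margin \<alpha> u v = u\<^sup>2 + \<alpha> (v - 4\<pi>) u - 4\<pi>\<^sup>2 (1 - \<alpha>)\<close>, whose larger
  root is the second branch of \<open>phi \<alpha> v\<close>.\<close>
definition dom_margin :: "real \<Rightarrow> real \<Rightarrow> real \<Rightarrow> real" where
  "dom_margin \<alpha> u v = (1 - \<alpha>) * (u - 4*pi^2/u) + \<alpha> * (u + v - 4*pi)"

lemma dom_margin_eq_psi: "dom_margin \<alpha> u v = psi \<alpha> u + \<alpha> * v - 4*pi*\<alpha>"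
  by (simp add: dom_margin_def psi_def algebra_simps)

lemma dom_margin_pos:
  assumes "0 < \<alpha>" "\<alpha> \<le> 1" "u > 0"
    and "u > (\<alpha> * (4 * pi - v) + sqrt (\<alpha>^2 * (4 * pi - v)^2 + 16 * pi^2 * (1 - \<alpha>))) / 2"
  shows "dom_margin \<alpha> u v > 0"
proof -
  define b where "b = \<alpha> * (4 * pi - v)"
  define s where "s = sqrt (b^2 + 16 * pi^2 * (1 - \<alpha>))"
  have "b^2 + 16 * pi^2 * (1 - \<alpha>) \<ge> 0"
    using assms(2) by (simp add: add_nonneg_nonneg)
  then have s2: "s^2 = b^2 + 16 * pi^2 * (1 - \<alpha>)" and "s \<ge> 0"
    by (simp_all add: s_def)
  have "u > (b + s) / 2"
    using assms(4) by (simp add: b_def s_def power_mult_distrib)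
  then have "(u - (b + s) / 2) * (u - (b - s) / 2) > 0"
    using \<open>s \<ge> 0\<close> by (intro mult_pos_pos) auto
  also have "(u - (b + s) / 2) * (u - (b - s) / 2) = u^2 - b * u + (b^2 - s^2) / 4"
    by (simp add: power2_eq_square field_simps)
  also have "\<dots> = u * dom_margin \<alpha> u v"
    using assms(3) unfolding s2 by (simp add: dom_margin_def b_def power2_eq_square field_simps)
  finally show ?thesis
    using assms(3) by (simp add: zero_less_mult_iff)
qed

lemma dom_margin_le_dual_gap:
  assumes "0 < w" "w \<le> 2*pi" "2*pi*(2*\<alpha> - 1) \<le> w"
  shows "dom_margin \<alpha> w U \<le> \<alpha> * (U - 4*pi^2/w)"
proof -
  define W where "W = 4*pi^2/w"
  define r where "r = (W - w) - 2*\<alpha>*(W - 2*pi)"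
  have "w * r = - ((w - 2*pi) * (w - 2*pi*(2*\<alpha> - 1)))"
    using assms(1) by (simp add: r_def W_def algebra_simps power2_eq_square)
  moreover have "(w - 2*pi) * (w - 2*pi*(2*\<alpha> - 1)) \<le> 0"
    using assms(2,3) by (intro mult_nonpos_nonneg) auto
  ultimately have "w * r \<ge> 0"
    by linarith
  then have "r \<ge> 0"
    using assms(1) by (simp add: zero_le_mult_iff)
  moreover have "\<alpha> * (U - W) = dom_margin \<alpha> w U + r"
    by (simp add: dom_margin_def r_def W_def[symmetric] algebra_simps)
  ultimately show ?thesis
    by (simp add: W_def)
qed

lemma psi_gain_le_dual_gap:
  assumes "\<alpha> \<le> 1" "0 < u" "u < w" "w < 2*pi*(2*\<alpha> - 1)"
  shows "psi \<alpha> w - psi \<alpha> u \<le> \<alpha> * (4*pi^2/u - 4*pi^2/w)"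
proof -
  define U W where "U = 4*pi^2/u" and "W = 4*pi^2/w"
  have "w > 0"
    using assms by simp
  have uU: "u * U = 4*pi^2" and wW: "w * W = 4*pi^2"
    using assms(2) \<open>w > 0\<close> by (simp_all add: U_def W_def)
  have "2*\<alpha> - 1 > 0"
    using assms(4) \<open>w > 0\<close> pi_gt_zero by (smt (verit) mult_nonneg_nonpos)
  have "u * w < (2*pi*(2*\<alpha> - 1)) * (2*pi*(2*\<alpha> - 1))"
    using assms(2-4) by (intro mult_strict_mono) auto
  also have "\<dots> = 4*pi^2 * ((2*\<alpha> - 1) * (2*\<alpha> - 1))"
    by (simp add: power2_eq_square algebra_simps)
  also have "\<dots> \<le> 4*pi^2 * (2*\<alpha> - 1)"
    using \<open>2*\<alpha> - 1 > 0\<close> assms(1) by (intro mult_left_mono) (auto simp: mult_le_cancel_left1)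
  finally have "(u * w) * (w - u) \<le> (4*pi^2 * (2*\<alpha> - 1)) * (w - u)"
    using assms(3) by (intro mult_right_mono) auto
  also have "\<dots> = (2*\<alpha> - 1) * (4*pi^2 * (w - u))"
    by (simp only: mult_ac)
  also have "4*pi^2 * (w - u) = (U - W) * (u * w)"
    using uU wW by (simp add: algebra_simps)
  also have "(2*\<alpha> - 1) * ((U - W) * (u * w)) = ((2*\<alpha> - 1) * (U - W)) * (u * w)"
    by (simp only: mult_ac)
  finally have "w - u \<le> (2*\<alpha> - 1) * (U - W)"
    using assms(2) \<open>w > 0\<close> by (simp add: mult.commute mult_le_cancel_left_pos)
  moreover have "psi \<alpha> w - psi \<alpha> u = (w - u) + (1 - \<alpha>) * (U - W)"
    by (simp add: psi_def U_def W_def algebra_simps)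
  ultimately have "psi \<alpha> w - psi \<alpha> u \<le> \<alpha> * (U - W)"
    by (simp add: algebra_simps)
  then show ?thesis
    by (simp add: U_def W_def)
qed

lemma dual_gap_ge:
  assumes "\<alpha> \<le> 1" "0 < u" "u < w" "w \<le> 2*pi"
  shows "min (psi \<alpha> w - psi \<alpha> u) (dom_margin \<alpha> w (4*pi^2/u)) \<le> \<alpha> * (4*pi^2/u - 4*pi^2/w)"
proof (cases "w < 2*pi*(2*\<alpha> - 1)")
  case True
  have "psi \<alpha> w - psi \<alpha> u \<le> \<alpha> * (4*pi^2/u - 4*pi^2/w)"
    by (rule psi_gain_le_dual_gap[OF assms(1-3) True])
  then show ?thesis
    by (rule min.coboundedI1)
next
  case False
  have "dom_margin \<alpha> w (4*pi^2/u) \<le> \<alpha> * (4*pi^2/u - 4*pi^2/w)"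
    using assms False by (intro dom_margin_le_dual_gap) auto
  then show ?thesis
    by (rule min.coboundedI2)
qed

lemma uniformly_bounded_pair_direct:
  assumes "0 < \<alpha>" "\<alpha> \<le> 1" "\<epsilon> > 0" "0 < u" "u \<le> 2*pi" "2*pi \<le> v" "u * v > 4*pi^2"
    and "u + \<alpha> * v - 4*pi^2/u > 2*pi*\<alpha>"
  shows "uniformly_bounded \<alpha> \<epsilon> A B u v \<and> uniformly_bounded \<alpha> \<epsilon> A B v u"
proof -
  have "v > 0"
    using assms(6) pi_gt_zero by linarith
  have "max (2*pi) (4*pi^2/u) = 4*pi^2/u" "max (2*pi) (4*pi^2/v) = 2*pi"
    using two_pi_le_dual[OF assms(4,5)] dual_le_two_pi[OF assms(6)] by simp_all
  moreover have "\<alpha> * (u + v) > psi \<alpha> (4*pi^2/u) + psi \<alpha> (2*pi)"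
    unfolding psi_dual[OF assms(4)] psi_2pi using assms(8) by (simp add: algebra_simps)
  ultimately show ?thesis
    using assms \<open>v > 0\<close>
    by (auto intro!: uniformly_bounded_from_beyond_self_dual simp: mult.commute add.commute)
qed

text \<open>The next point \<open>w\<close> has \<open>psi w\<close> just below \<open>u + \<alpha> v - 4\<pi>\<^sup>2/u\<close>, which makes
  \<open>(4\<pi>\<^sup>2/u, w)\<close> a valid source for a transfer to \<open>(u, v)\<close>.\<close>
lemma next_iteration_point:
  assumes "0 < \<alpha>" "\<alpha> \<le> 1" "0 < u" "u \<le> 2*pi" "0 < e" "e < \<alpha> * (v - 4*pi^2/u)"
    and "u + \<alpha> * v - 4*pi^2/u \<le> 2*pi*\<alpha>"
  obtains w where "u < w" "w < 2*pi" "4*pi^2/w < v"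
    and "psi \<alpha> w = u + \<alpha> * v - 4*pi^2/u - e"
proof -
  define U M where "U = 4*pi^2/u" and "M = u + \<alpha> * v - U"
  have "U > 0" "u * U = 4*pi^2"
    using assms(3) by (simp_all add: U_def)
  have "v - U > 0"
    using assms(1,5,6) by (simp add: U_def) (smt (verit) mult_nonneg_nonpos)
  have M: "M = psi \<alpha> u + \<alpha> * (v - U)"
    unfolding M_def U_def by (rule psi_add_gap)
  have "M - e > 0 \<or> \<alpha> < 1"
    using assms(2,3,6) M by (cases "\<alpha> = 1") (auto simp: psi_def U_def)
  then obtain w where "w > 0" and psi_w: "psi \<alpha> w = M - e"
    using psi_surj[OF assms(2)] by blast
  show thesis
  proof
    show "u < w"
      using psi_less_iff[OF assms(2) assms(3) \<open>w > 0\<close>] psi_w M assms(6) by (simp add: U_def)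
    show "w < 2*pi"
      using psi_less_iff[OF assms(2) \<open>w > 0\<close>, of "2*pi"] psi_w assms(5,7) by (simp add: psi_2pi M_def U_def)
    have "u * v > 4*pi^2"
      using \<open>v - U > 0\<close> assms(3) by (simp add: U_def divide_less_eq mult.commute)
    then have "u > 4*pi^2/v"
      using \<open>v - U > 0\<close> \<open>U > 0\<close> by (simp add: divide_less_eq)
    moreover have "\<alpha> * (v - U) \<le> v - U"
      using assms(2) \<open>v - U > 0\<close> by (simp add: mult_le_cancel_right1)
    ultimately have "psi \<alpha> (4*pi^2/v) < psi \<alpha> w"
      using psi_w assms(6) \<open>v - U > 0\<close> \<open>U > 0\<close> by (simp add: psi_dual M_def U_def algebra_simps)
    then have "4*pi^2/v < w"
      using psi_less_iff[OF assms(2) _ \<open>w > 0\<close>] \<open>v - U > 0\<close> \<open>U > 0\<close> by simp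
    then show "4*pi^2/w < v"
      using \<open>w > 0\<close> \<open>v - U > 0\<close> \<open>U > 0\<close> by (simp add: divide_less_eq mult.commute)
    show "psi \<alpha> w = u + \<alpha> * v - 4*pi^2/u - e"
      using psi_w by (simp add: M_def U_def)
  qed
qed

lemma uniformly_bounded_pair_transfer:
  assumes "uniformly_bounded \<alpha> \<epsilon> A B w (4*pi^2/u)" "uniformly_bounded \<alpha> \<epsilon> A B (4*pi^2/u) w"
    and "0 < u" "0 < v" "0 < w" "4*pi^2/w \<le> v" "u * v > 4*pi^2"
    and "\<alpha> * (u + v) > psi \<alpha> (4*pi^2/u) + psi \<alpha> w"
  shows "uniformly_bounded \<alpha> \<epsilon> A B u v \<and> uniformly_bounded \<alpha> \<epsilon> A B v u"
proof -
  have U: "4*pi^2/u > 0" "4*pi^2/(4*pi^2/u) \<le> u"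
    using assms(3) by simp_all
  have "uniformly_bounded \<alpha> \<epsilon> A B u v"
    by (rule uniformly_bounded_transfer[OF assms(2,3,4) U(1) assms(5) U(2) assms(6-8)])
  moreover have "uniformly_bounded \<alpha> \<epsilon> A B v u"
    using assms(7,8)
    by (intro uniformly_bounded_transfer[OF assms(1,4,3,5) U(1) assms(6) U(2)]) (simp_all add: ac_simps)
  ultimately show ?thesis ..
qed

text \<open>The invariant of the iteration: each transfer step lowers both margins by \<open>e\<close>
  and raises \<open>psi u\<close> by at least \<open>d\<close>, so after at most \<open>N\<close> steps
  \<open>u + \<alpha> v - 4\<pi>\<^sup>2/u > 2\<pi>\<alpha>\<close> and the transfer from beyond the self-dual point applies.\<close>
definition iteration_region :: "real \<Rightarrow> real \<Rightarrow> real \<Rightarrow> nat \<Rightarrow> real \<Rightarrow> real \<Rightarrow> bool" where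
  "iteration_region \<alpha> d e N u v \<longleftrightarrow>
     0 < u \<and> u \<le> 2*pi \<and> 2*pi \<le> v \<and>
     d + real N * e \<le> \<alpha> * (v - 4*pi^2/u) \<and> d + real N * e \<le> dom_margin \<alpha> u v \<and>
     2*pi*\<alpha> - real N * d \<le> psi \<alpha> u"

lemma iteration_region_gap_pos:
  assumes "iteration_region \<alpha> d e N u v" "d > 0" "e > 0"
  shows "0 < \<alpha> * (v - 4*pi^2/u)"
proof -
  have "real N * e \<ge> 0"
    using assms(3) by simp
  then show ?thesis
    using assms(1,2) unfolding iteration_region_def by linarith
qed

lemma iteration_region_step:
  assumes "0 < \<alpha>" "\<alpha> \<le> 1" "d > 0" "e > 0" "iteration_region \<alpha> d e (Suc N) u v"
    and "u + \<alpha> * v - 4*pi^2/u \<le> 2*pi*\<alpha>"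
  obtains w where "iteration_region \<alpha> d e N w (4*pi^2/u)" "4*pi^2/w < v"
    and "\<alpha> * (u + v) > psi \<alpha> (4*pi^2/u) + psi \<alpha> w"
proof -
  define U where "U = 4*pi^2/u"
  have "real N * e \<ge> 0"
    using assms(4) by simp
  from assms(5) have "0 < u" "u \<le> 2*pi"
    and gap: "d + real N * e + e \<le> \<alpha> * (v - U)"
    and margin: "d + real N * e + e \<le> dom_margin \<alpha> u v"
    and psi_u: "2*pi*\<alpha> - real N * d - d \<le> psi \<alpha> u"
    by (simp_all add: iteration_region_def U_def algebra_simps)
  have "e < \<alpha> * (v - 4*pi^2/u)"
    using gap assms(3) \<open>real N * e \<ge> 0\<close> by (simp add: U_def)
  then obtain w where "u < w" "w < 2*pi" "4*pi^2/w < v"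
    and psi_w: "psi \<alpha> w = u + \<alpha> * v - 4*pi^2/u - e"
    by (rule next_iteration_point[OF assms(1,2) \<open>0 < u\<close> \<open>u \<le> 2*pi\<close> assms(4) _ assms(6)])
  have psi_gain: "psi \<alpha> w - psi \<alpha> u = \<alpha> * (v - U) - e"
    using psi_w psi_add_gap[of u \<alpha> v] by (simp add: U_def)
  then have margin_w: "dom_margin \<alpha> w U = dom_margin \<alpha> u v - e"
    by (simp add: dom_margin_eq_psi algebra_simps)
  have "iteration_region \<alpha> d e N w U"
    unfolding iteration_region_def
  proof (intro conjI)
    show "0 < w" "w \<le> 2*pi" "2*pi \<le> U"
      using \<open>u < w\<close> \<open>w < 2*pi\<close> \<open>0 < u\<close> two_pi_le_dual[OF \<open>0 < u\<close> \<open>u \<le> 2*pi\<close>] by (auto simp: U_def)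
    show "d + real N * e \<le> \<alpha> * (U - 4*pi^2/w)"
      using dual_gap_ge[OF assms(2) \<open>0 < u\<close> \<open>u < w\<close>] \<open>w < 2*pi\<close> psi_gain margin_w gap margin
      by (simp add: U_def)
    show "d + real N * e \<le> dom_margin \<alpha> w U"
      using margin_w margin by simp
    show "2*pi*\<alpha> - real N * d \<le> psi \<alpha> w"
      using psi_gain psi_u gap \<open>real N * e \<ge> 0\<close> by linarith
  qed
  moreover have "\<alpha> * (u + v) > psi \<alpha> U + psi \<alpha> w"
    using psi_w assms(4) psi_dual[OF \<open>0 < u\<close>, of \<alpha>] by (simp add: U_def algebra_simps)
  ultimately show thesis
    using that \<open>4*pi^2/w < v\<close> by (simp add: U_def)
qed

lemma uniformly_bounded_iterate:
  assumes "0 < \<alpha>" "\<alpha> \<le> 1" "\<epsilon> > 0" "d > 0" "e > 0" "iteration_region \<alpha> d e N u v"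
  shows "uniformly_bounded \<alpha> \<epsilon> A B u v \<and> uniformly_bounded \<alpha> \<epsilon> A B v u"
  using assms(6)
proof (induction N arbitrary: u v)
  case 0
  have gap: "0 < \<alpha> * (v - 4*pi^2/u)"
    by (rule iteration_region_gap_pos[OF 0 assms(4,5)])
  with 0 have "u + \<alpha> * v - 4*pi^2/u > 2*pi*\<alpha>"
    unfolding psi_add_gap iteration_region_def by simp
  moreover have "u * v > 4*pi^2"
    using 0 gap assms(1) unfolding iteration_region_def by (blast intro: four_pi2_less_mult_of_gap)
  ultimately show ?case
    using 0 unfolding iteration_region_def by (intro uniformly_bounded_pair_direct[OF assms(1-3)]) auto
next
  case (Suc N)
  then have "0 < u" "u \<le> 2*pi" "2*pi \<le> v" "v > 0"
    using pi_gt_zero unfolding iteration_region_def by auto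
  have "u * v > 4*pi^2"
    using four_pi2_less_mult_of_gap[OF \<open>0 < u\<close> iteration_region_gap_pos[OF Suc.prems assms(4,5)] assms(1)] .
  show ?case
  proof (cases "u + \<alpha> * v - 4*pi^2/u > 2*pi*\<alpha>")
    case True
    then show ?thesis
      using \<open>0 < u\<close> \<open>u \<le> 2*pi\<close> \<open>2*pi \<le> v\<close> \<open>u * v > 4*pi^2\<close>
      by (intro uniformly_bounded_pair_direct[OF assms(1-3)])
  next
    case False
    then have "u + \<alpha> * v - 4*pi^2/u \<le> 2*pi*\<alpha>"
      by simp
    then obtain w where "iteration_region \<alpha> d e N w (4*pi^2/u)" "4*pi^2/w < v"
      and ineq: "\<alpha> * (u + v) > psi \<alpha> (4*pi^2/u) + psi \<alpha> w"
      by (rule iteration_region_step[OF assms(1,2,4,5) Suc.prems])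
    with Suc.IH have IH: "uniformly_bounded \<alpha> \<epsilon> A B w (4*pi^2/u)" "uniformly_bounded \<alpha> \<epsilon> A B (4*pi^2/u) w"
      by blast+
    have "w > 0" "4*pi^2/w \<le> v"
      using \<open>iteration_region \<alpha> d e N w (4*pi^2/u)\<close> \<open>4*pi^2/w < v\<close>
      unfolding iteration_region_def by auto
    with IH ineq show ?thesis
      using \<open>0 < u\<close> \<open>v > 0\<close> \<open>u * v > 4*pi^2\<close> by (intro uniformly_bounded_pair_transfer)
  qed
qed

lemma iteration_region_exists:
  assumes "0 < u" "u \<le> 2*pi" "2*pi \<le> v" "0 < \<alpha> * (v - 4*pi^2/u)" "0 < dom_margin \<alpha> u v"
  obtains d e N where "d > 0" "e > 0" "iteration_region \<alpha> d e N u v"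
proof -
  define \<mu> where "\<mu> = min (\<alpha> * (v - 4*pi^2/u)) (dom_margin \<alpha> u v)"
  define d where "d = \<mu> / 2"
  define N where "N = nat \<lceil>(2*pi*\<alpha> - psi \<alpha> u) / d\<rceil>"
  define e where "e = \<mu> / (2 * (real N + 1))"
  have "\<mu> > 0"
    using assms(4,5) by (simp add: \<mu>_def)
  then have "d > 0" "e > 0"
    by (simp_all add: d_def e_def)
  have "real N * e = \<mu> / 2 * (real N / (real N + 1))"
    by (simp add: e_def field_simps)
  also have "\<dots> \<le> \<mu> / 2"
    using \<open>\<mu> > 0\<close> by (intro mult_left_le) auto
  finally have "d + real N * e \<le> \<mu>"
    by (simp add: d_def)
  moreover have "(2*pi*\<alpha> - psi \<alpha> u) / d \<le> real N"
    unfolding N_def by linarith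
  then have "2*pi*\<alpha> - real N * d \<le> psi \<alpha> u"
    using \<open>d > 0\<close> by (simp add: divide_le_eq)
  ultimately have "iteration_region \<alpha> d e N u v"
    using assms(1-3) unfolding iteration_region_def \<mu>_def by linarith
  with \<open>d > 0\<close> \<open>e > 0\<close> show thesis
    by (rule that)
qed

lemma uniformly_bounded_beyond_phi:
  assumes "0 < \<alpha>" "\<alpha> \<le> 1" "\<epsilon> > 0" "v > 2*pi" "u > phi \<alpha> v"
  shows "uniformly_bounded \<alpha> \<epsilon> A B u v \<and> uniformly_bounded \<alpha> \<epsilon> A B v u"
proof (cases "u > 2*pi")
  case True
  then show ?thesis
    using uniformly_bounded_beyond_self_dual[OF assms(3)] assms(4) by blast
next
  case False
  have "v > 0"
    using assms(4) pi_gt_zero by linarith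
  then have "4*pi^2/v > 0"
    by simp
  have "u > 4*pi^2/v"
    and root: "u > (\<alpha> * (4 * pi - v) + sqrt (\<alpha>^2 * (4 * pi - v)^2 + 16 * pi^2 * (1 - \<alpha>))) / 2"
    using assms(5) by (simp_all add: phi_def)
  then have "u > 0"
    using \<open>4*pi^2/v > 0\<close> by linarith
  have "v > 4*pi^2/u"
    using \<open>u > 4*pi^2/v\<close> \<open>u > 0\<close> \<open>v > 0\<close> by (simp add: divide_less_eq pos_divide_less_eq mult.commute)
  then have "0 < \<alpha> * (v - 4*pi^2/u)"
    using assms(1) by simp
  moreover have "u \<le> 2*pi" "2*pi \<le> v"
    using False assms(4) by simp_all
  ultimately obtain d e N where "d > 0" "e > 0" "iteration_region \<alpha> d e N u v"
    using iteration_region_exists[OF \<open>u > 0\<close> _ _ _ dom_margin_pos[OF assms(1,2) \<open>u > 0\<close> root]]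
    by metis
  then show ?thesis
    by (rule uniformly_bounded_iterate[OF assms(1-3)])
qed

lemma Dom_pos:
  assumes "(x, y) \<in> Dom \<alpha>"
  shows "x > 0" "y > 0"
proof -
  have "u > 0 \<and> v > 0" if "v > 2*pi" "u > phi \<alpha> v" for u v
  proof -
    have "v > 0"
      using that(1) pi_gt_zero by linarith
    moreover have "u > 4*pi^2/v"
      using that(2) by (simp add: phi_def)
    moreover have "4*pi^2/v > 0"
      using \<open>v > 0\<close> by simp
    ultimately show ?thesis
      by linarith
  qed
  then show "x > 0" "y > 0"
    using assms unfolding Dom_def by auto
qed

lemma uniformly_bounded_on_Dom:
  assumes "0 < \<alpha>" "\<alpha> \<le> 1" "\<epsilon> > 0" "(x, y) \<in> Dom \<alpha>"
  shows "uniformly_bounded \<alpha> \<epsilon> A B x y"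
  using assms(4) uniformly_bounded_beyond_phi[OF assms(1-3), of y x] uniformly_bounded_beyond_phi[OF assms(1-3), of x y]
  unfolding Dom_def by auto

lemma ln_Zpart_bounded:
  assumes "uniformly_bounded \<alpha> \<epsilon> A B x y" "x > 0" "y > 0"
  shows "\<exists>K. \<forall>c n. in_class \<alpha> \<epsilon> A B c n \<longrightarrow> \<bar>ln (Zpart c n x y) - c / 24 * (x + y)\<bar> \<le> K"
proof -
  obtain K where K: "\<And>c n. in_class \<alpha> \<epsilon> A B c n \<Longrightarrow> Zred n x y \<le> K"
    using assms(1) unfolding uniformly_bounded_def by blast
  define L where "L = norm_char 0 x * norm_char 0 y"
  have "L > 0"
    using assms(2,3) by (simp add: L_def norm_char_pos)
  have "\<bar>ln (Zpart c n x y) - c / 24 * (x + y)\<bar> \<le> \<bar>ln L\<bar> + \<bar>ln K\<bar>" if "in_class \<alpha> \<epsilon> A B c n" for c n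
  proof -
    have "L \<le> Zred n x y"
      using that assms(2,3) Zred_ge_vacuum unfolding in_class_def L_def by blast
    then have "ln L \<le> ln (Zred n x y)" "ln (Zred n x y) \<le> ln K"
      using \<open>L > 0\<close> K[OF that] by simp_all
    moreover have "ln (Zpart c n x y) - c / 24 * (x + y) = ln (Zred n x y)"
      using \<open>L \<le> Zred n x y\<close> \<open>L > 0\<close> by (simp add: Zpart_eq_Zred[OF assms(2,3)] ln_mult)
    ultimately show ?thesis
      by linarith
  qed
  then show ?thesis
    by blast
qed

lemma ln_Zpart_bounded_dual:
  assumes "uniformly_bounded \<alpha> \<epsilon> A B (4 * pi^2 / x) (4 * pi^2 / y)" "x > 0" "y > 0"
  shows "\<exists>K. \<forall>c n. in_class \<alpha> \<epsilon> A B c n \<longrightarrow> \<bar>ln (Zpart c n x y) - pi^2 * c / 6 * (1 / x + 1 / y)\<bar> \<le> K"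
proof -
  obtain K where K: "\<And>c n. in_class \<alpha> \<epsilon> A B c n \<Longrightarrow>
      \<bar>ln (Zpart c n (4 * pi^2 / x) (4 * pi^2 / y)) - c / 24 * (4 * pi^2 / x + 4 * pi^2 / y)\<bar> \<le> K"
    using ln_Zpart_bounded[OF assms(1)] assms(2,3) by auto
  have "\<bar>ln (Zpart c n x y) - pi^2 * c / 6 * (1 / x + 1 / y)\<bar> \<le> K" if "in_class \<alpha> \<epsilon> A B c n" for c n
  proof -
    have modular: "Zpart c n x y = Zpart c n (4 * pi^2 / x) (4 * pi^2 / y)"
      using that assms(2,3) unfolding in_class_def is_CFT_def by blast
    have "pi^2 * c / 6 * (1 / x + 1 / y) = c / 24 * (4 * pi^2 / x + 4 * pi^2 / y)"
      by (simp add: field_simps)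
    then show ?thesis
      unfolding modular by (simp only: K[OF that])
  qed
  then show ?thesis
    by blast
qed

theorem corollary2:
  fixes \<alpha> \<epsilon> :: real and A :: "real \<Rightarrow> real" and B :: "real \<Rightarrow> real \<Rightarrow> real"
  assumes "0 < \<alpha>" and "\<alpha> \<le> 1" and "\<epsilon> > 0"
    and "\<forall>\<beta>. \<beta> > 2 * pi \<longrightarrow> A \<beta> \<ge> 0"
    and "\<forall>\<beta>L \<beta>R. \<beta>L > 0 \<and> \<beta>R > 0 \<and> \<beta>L * \<beta>R > 4 * pi^2 \<longrightarrow> B \<beta>L \<beta>R \<ge> 0"
  shows "(\<forall>\<beta>L \<beta>R. (\<beta>L, \<beta>R) \<in> Dom \<alpha> \<longrightarrow>
            (\<exists>K::real. \<forall>c n. in_class \<alpha> \<epsilon> A B c n \<longrightarrow>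
               \<bar>ln (Zpart c n \<beta>L \<beta>R) - c / 24 * (\<beta>L + \<beta>R)\<bar> \<le> K)) \<and>
         (\<forall>\<beta>L \<beta>R. (4 * pi^2 / \<beta>L, 4 * pi^2 / \<beta>R) \<in> Dom \<alpha> \<longrightarrow>
            (\<exists>K::real. \<forall>c n. in_class \<alpha> \<epsilon> A B c n \<longrightarrow>
               \<bar>ln (Zpart c n \<beta>L \<beta>R) - pi^2 * c / 6 * (1 / \<beta>L + 1 / \<beta>R)\<bar> \<le> K))"
proof (intro conjI allI impI)
  fix x y
  assume "(x, y) \<in> Dom \<alpha>"
  then show "\<exists>K. \<forall>c n. in_class \<alpha> \<epsilon> A B c n \<longrightarrow> \<bar>ln (Zpart c n x y) - c / 24 * (x + y)\<bar> \<le> K"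
    by (intro ln_Zpart_bounded uniformly_bounded_on_Dom[OF assms(1-3)] Dom_pos)
next
  fix x y
  assume dual: "(4 * pi^2 / x, 4 * pi^2 / y) \<in> Dom \<alpha>"
  then have "x > 0" "y > 0"
    using Dom_pos[OF dual] by (simp_all add: zero_less_divide_iff)
  with dual show "\<exists>K. \<forall>c n. in_class \<alpha> \<epsilon> A B c n \<longrightarrow>
      \<bar>ln (Zpart c n x y) - pi^2 * c / 6 * (1 / x + 1 / y)\<bar> \<le> K"
    by (intro ln_Zpart_bounded_dual uniformly_bounded_on_Dom[OF assms(1-3)])
qed

end
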